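(* The finite set $\widetilde{\mathcal{S}}$ admits a unique ordered partition $$\widetilde{\mathcal{S}}=\bigcup_{i=0}^{\ell'+1}\widetilde{\mathcal{S}}_i$$ into pairwise disjoint, possibly empty, subsets such that (i) for $0\le i_0<i\le\ell'+1$, elements $y_0\in\mathcal{S}^{\mathbf G}_{i_0}$ and $x\in\widetilde{\mathcal{S}}_i$ are either incomparable or satisfy $x\succ y_0$; (ii) for every $x_0\in\widetilde{\mathcal{S}}_{i_0}$ and every integer $i$ with $i_0\le i\le\ell'$, there exists $y\in\mathcal{S}^{\mathbf G}_i$ with $y\succ x_0$. Moreover, this partition satisfies (iii) for $0\le i_0<i\le\ell'+1$, elements $x_0\in\widetilde{\mathcal{S}}_{i_0}$ and $x\in\widetilde{\mathcal{S}}_i$ are either incomparable or satisfy $x\succ x_0$.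
   Context: Let $F$ be a number field with adèles $\mathbb{A}$, $D$ a central division algebra over $F$ of degree $d>1$, $G'_m$ the group of invertible elements of $M_m(D)$, $G_m=GL_m$ over $F$; parabolics are standard (block-upper-triangular), attached to ordered partitions; $\nu$ is the absolute value of reduced norm (resp. determinant). For the parabolic attached to $(n_1,\dots,n_r)$, third entries are $\underline z\in\mathbb{R}^r$ with $\sum n_jz_j=0$, $z_1\ge\dots\ge z_r$, $\nu_{\underline z}=\prod\nu(\ell_j)^{z_j}$; $\iota'$ (for $G'_n$) and $\iota$ (for $G_{nd}$) send $\underline z$ to $(z_1,\dots,z_1,\dots,z_r,\dots,z_r)$ with $z_j$ repeated $n_j$ times. Partial order on $\mathbb{R}^N$: $\underline s\succ\underline t$ iff $\underline s\ne\underline t$ and $\sum_{j\le i}s_j\le\sum_{j\le i}t_j$ for $i=1,\dots,N-1$; comparable means one is $\succ$ the other. Fix a cuspidal automorphic representation $\pi'$ of the Levi factor of a parabolic $P'$ of $G'_n$ and let $\sigma$ be the cuspidal representation of the Levi factor of a parabolic $Q$ of $G_{nd}$ given by the cuspidal support of its factorwise global Jacquet–Langlands transfer $\mathbf G(\pi')$ (Badulescu). $\mathcal{M}'$ (resp. $\mathcal{M}$) is the set of triples $(R',\Pi',\underline z')$ with $R'$ a parabolic of $G'_n$ containing an element associate to $P'$, $\Pi'$ a unitary discrete spectrum representation of its Levi factor, $\underline z'$ in the closed positive chamber, such that the cuspidal support of $\Pi'\otimes\nu_{\underline z'}$ is associate to $\pi'$ (resp. the same for $G_{nd}$, $Q$,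 $\sigma$). The map $\mathbf G:\mathcal{M}'\to\mathcal{M}$ sends $(R',\Pi'_1\otimes\cdots\otimes\Pi'_r,\underline z')$, $R'$ attached to $(n_1,\dots,n_r)$, to $(R,\mathbf G(\Pi'_1)\otimes\cdots\otimes\mathbf G(\Pi'_r),\underline z')$, $R$ attached to $(n_1d,\dots,n_rd)$. Let $\mathcal{S}'=\{\iota'(\underline z'):(R',\Pi',\underline z')\in\mathcal{M}'\}$ and $\mathcal{S}=\{\iota(\underline z):(R,\Pi,\underline z)\in\mathcal{M}\}$ (finite sets). Partition $\mathcal{S}'$: let $\mathcal{S}^{\rm aux}_0$ be the set of $\succ$-maximal elements of $\mathcal{S}'$ and inductively $\mathcal{S}^{\rm aux}_i$ the maximal elements of $\mathcal{S}'\setminus\bigcup_{j<i}\mathcal{S}^{\rm aux}_j$, until exhausted after $\ell'+1$ steps; $\mathcal{S}'_i=\mathcal{S}^{\rm aux}_{\ell'-i}$. Define $\mathcal{S}^{\mathbf G}_i=\{\iota(\mathbf G(\underline z')):\iota'(\underline z')\in\mathcal{S}'_i\}$ for $0\le i\le\ell'$, where $\iota(\mathbf G(\underline z'))$ is obtained from $\iota'(\underline z')$ by repeating each coordinate $d$ times, $\mathcal{S}^{\mathbf G}=\bigcup_i\mathcal{S}^{\mathbf G}_i$, and $\widetilde{\mathcal{S}}=\mathcal{S}\setminus\mathcal{S}^{\mathbf G}$. *)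

theory Defs
  imports Complex_Main
begin

text \<open>Vectors in R^N are represented as real lists of length N.
  The partial order: s \<succ> t iff s \<noteq> t and for i = 1..N-1 the i-th partial sum of s
  is at most the i-th partial sum of t.\<close>

definition succ :: "real list \<Rightarrow> real list \<Rightarrow> bool" where
  "succ s t \<longleftrightarrow> s \<noteq> t \<and>
     (\<forall>i\<in>{1..<length s}. sum_list (take i s) \<le> sum_list (take i t))"

definition comparable :: "real list \<Rightarrow> real list \<Rightarrow> bool" where
  "comparable s t \<longleftrightarrow> succ s t \<or> succ t s"

definition maxel :: "real list set \<Rightarrow> real list set" where
  "maxel A = {x \<in> A. \<not> (\<exists>y\<in>A. succ y x)}"

fun remS :: "real list set \<Rightarrow> nat \<Rightarrow> real list set" where
  "remS A 0 = A"
| "remS A (Suc k) = remS A k - maxel (remS A k)"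

definition auxS :: "real list set \<Rightarrow> nat \<Rightarrow> real list set" where
  "auxS A k = maxel (remS A k)"

definition ellp :: "real list set \<Rightarrow> nat" where
  "ellp A = (LEAST k. remS A (Suc k) = {})"

definition Sp :: "real list set \<Rightarrow> nat \<Rightarrow> real list set" where
  "Sp A i = auxS A (ellp A - i)"

text \<open>repeat each coordinate d times (\<iota>(G(z')) from \<iota>'(z'))\<close>
definition rep :: "nat \<Rightarrow> real list \<Rightarrow> real list" where
  "rep d v = concat (map (replicate d) v)"

definition SG :: "nat \<Rightarrow> real list set \<Rightarrow> nat \<Rightarrow> real list set" where
  "SG d A i = rep d ` Sp A i"

definition SGall :: "nat \<Rightarrow> real list set \<Rightarrow> real list set" where
  "SGall d A = (\<Union>i\<in>{0..ellp A}. SG d A i)"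

definition Stilde :: "nat \<Rightarrow> real list set \<Rightarrow> real list set \<Rightarrow> real list set" where
  "Stilde d A S = S - SGall d A"

text \<open>The defining properties of the ordered partition T_0,...,T_{\<ell>'+1} of S-tilde
  (T i = {} for i > \<ell>'+1 to make the indexing canonical).\<close>
definition good_partition ::
  "nat \<Rightarrow> real list set \<Rightarrow> real list set \<Rightarrow> (nat \<Rightarrow> real list set) \<Rightarrow> bool" where
  "good_partition d A S T \<longleftrightarrow>
     (\<forall>i>Suc (ellp A). T i = {}) \<and>
     (\<Union>i\<in>{0..Suc (ellp A)}. T i) = Stilde d A S \<and>
     (\<forall>i\<in>{0..Suc (ellp A)}. \<forall>j\<in>{0..Suc (ellp A)}. i \<noteq> j \<longrightarrow> T i \<inter> T j = {}) \<and>
     (\<forall>i0 i. i0 < i \<and> i \<le> Suc (ellp A) \<longrightarrow>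
        (\<forall>y0\<in>SG d A i0. \<forall>x\<in>T i. \<not> comparable x y0 \<or> succ x y0)) \<and>
     (\<forall>i0. \<forall>x0\<in>T i0. \<forall>i. i0 \<le> i \<and> i \<le> ellp A \<longrightarrow> (\<exists>y\<in>SG d A i. succ y x0))"

end

theory Submission imports Defs begin

text \<open>Peeling off maximal elements makes every element of a later layer \<open>auxS A k'\<close>
  dominated by an element of each earlier layer \<open>auxS A k\<close>, and repeating coordinates
  \<open>d\<close> times preserves the order \<open>\<succ>\<close> (prefix sums of \<open>rep d v\<close> interpolate those of \<open>v\<close>).
  Hence the layers \<open>SG d A j\<close> that dominate a given vector \<open>x\<close> form an upper interval
  \<open>{r..\<ell>'}\<close> of \<open>{0..\<ell>'}\<close>. Putting \<open>x\<close> into the piece of index \<open>r\<close> (\<open>\<ell>'+1\<close> if no layer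
  dominates \<open>x\<close>) is the only partition with properties (i) and (ii), and (iii) holds because
  every layer dominating \<open>x\<^sub>0\<close> also dominates any \<open>x \<prec> x\<^sub>0\<close>.\<close>

definition hyperplane :: "nat \<Rightarrow> real \<Rightarrow> real list set" where
  "hyperplane n c = {v. length v = n \<and> sum_list v = c}"

lemma list_eq_if_prefix_sums_eq:
  fixes s t :: "real list"
  assumes "length s = length t" and "\<And>i. sum_list (take i s) = sum_list (take i t)"
  shows "s = t"
proof (rule nth_equalityI)
  show "length s = length t" by fact
  fix k assume "k < length s"
  then show "s ! k = t ! k"
    using assms(1) assms(2)[of k] assms(2)[of "Suc k"] by (simp add: take_Suc_conv_app_nth)
qed

lemma succ_iff_prefix_sums:
  assumes "length s = length t" and "sum_list s = sum_list t"
  shows "succ s t \<longleftrightarrow> s \<noteq> t \<and> (\<forall>i. sum_list (take i s) \<le> sum_list (take i t))"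
proof -
  have "sum_list (take i s) \<le> sum_list (take i t)"
    if "\<forall>i\<in>{1..<length s}. sum_list (take i s) \<le> sum_list (take i t)" for i
    using that assms by (cases "i = 0"; cases "i < length s") auto
  then show ?thesis unfolding succ_def by blast
qed

lemma succ_asym:
  assumes "s \<in> hyperplane n c" and "t \<in> hyperplane n c" and "succ s t"
  shows "\<not> succ t s"
proof
  assume "succ t s"
  have same: "length s = length t" "sum_list s = sum_list t"
    using assms(1,2) by (simp_all add: hyperplane_def)
  have "sum_list (take i s) = sum_list (take i t)" for i
    using \<open>succ s t\<close> \<open>succ t s\<close> same
    by (simp add: succ_iff_prefix_sums order_antisym)
  with same(1) have "s = t" by (rule list_eq_if_prefix_sums_eq)
  with \<open>succ s t\<close> show False by (simp add: succ_def)
qed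

lemma succ_trans:
  assumes "r \<in> hyperplane n c" and "s \<in> hyperplane n c" and "t \<in> hyperplane n c"
    and "succ r s" and "succ s t"
  shows "succ r t"
proof -
  have "r \<noteq> t" using assms succ_asym by blast
  with assms show ?thesis
    by (simp add: succ_iff_prefix_sums hyperplane_def) (meson order_trans)
qed

lemma length_rep [simp]: "length (rep d v) = d * length v"
  by (induction v) (auto simp: rep_def)

lemma sum_list_rep: "sum_list (rep d v) = real d * sum_list v"
  by (induction v) (auto simp: rep_def algebra_simps sum_list_replicate)

lemma rep_in_hyperplane: "v \<in> hyperplane n c \<Longrightarrow> rep d v \<in> hyperplane (n * d) (real d * c)"
  by (simp add: hyperplane_def sum_list_rep mult.commute)

lemma sum_list_take_rep:
  assumes "r < d"
  shows "sum_list (take (d * j + r) (rep d v))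
           = (real d - real r) * sum_list (take j v) + real r * sum_list (take (Suc j) v)"
proof (cases "j < length v")
  case True
  then have "rep d v = rep d (take j v) @ replicate d (v ! j) @ rep d (drop (Suc j) v)"
    by (subst id_take_nth_drop[OF True]) (simp add: rep_def)
  with True assms show ?thesis
    by (simp add: sum_list_rep sum_list_replicate take_Suc_conv_app_nth min_def algebra_simps)
next
  case False
  then have "length (rep d v) \<le> d * j + r" by (simp add: mult_le_mono2 trans_le_add1)
  with False show ?thesis by (simp add: sum_list_rep algebra_simps)
qed

lemma succ_rep:
  assumes "d \<ge> 1" and "s \<in> hyperplane n c" and "t \<in> hyperplane n c" and "succ s t"
  shows "succ (rep d s) (rep d t)"
proof -
  have s_t: "s \<noteq> t" and prefix_le: "\<And>j. sum_list (take j s) \<le> sum_list (take j t)"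
    using assms(2-4) by (auto simp: succ_iff_prefix_sums hyperplane_def)
  have "rep d s \<noteq> rep d t"
  proof
    assume "rep d s = rep d t"
    then have "real d * sum_list (take j s) = real d * sum_list (take j t)" for j
      using sum_list_take_rep[of 0 d j s] sum_list_take_rep[of 0 d j t] assms(1) by simp
    then have "s = t"
      using assms(1-3) by (intro list_eq_if_prefix_sums_eq) (auto simp: hyperplane_def)
    with s_t show False ..
  qed
  moreover have "sum_list (take m (rep d s)) \<le> sum_list (take m (rep d t))" for m
  proof -
    have m: "m = d * (m div d) + m mod d" and r: "m mod d < d"
      using assms(1) by simp_all
    show ?thesis
      using sum_list_take_rep[OF r, of "m div d"] prefix_le r
      by (subst (1 2) m) (simp add: add_mono mult_left_mono)
  qed
  ultimately show ?thesis
    using assms(2,3) succ_iff_prefix_sums[of "rep d s" "rep d t"]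
    by (simp add: hyperplane_def sum_list_rep)
qed

lemma remS_subset: "remS A k \<subseteq> A"
  by (induction k) auto

lemma auxS_subset: "auxS A k \<subseteq> A"
  using remS_subset by (auto simp: auxS_def maxel_def)

lemma maxel_dominates:
  assumes "finite B" and "B \<subseteq> hyperplane n c" and "z \<in> hyperplane n c"
    and "w \<in> B" and "succ w z"
  shows "\<exists>m\<in>maxel B. succ m z"
proof -
  let ?r = "{(a, b). a \<in> B \<and> b \<in> B \<and> succ a b}"
  have "finite ?r"
    by (rule finite_subset[of _ "B \<times> B"]) (use assms(1) in auto)
  moreover have "trans ?r"
  proof (rule transI)
    fix a b e assume "(a, b) \<in> ?r" and "(b, e) \<in> ?r"
    with assms(2) show "(a, e) \<in> ?r" by (auto intro: succ_trans[of a n c b e])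
  qed
  then have "acyclic ?r"
    by (simp add: acyclic_def trancl_id succ_def)
  ultimately have "wf ?r"
    by (rule finite_acyclic_wf)
  then obtain m where m: "m \<in> {m \<in> B. succ m z}"
    and m_max: "\<And>y. (y, m) \<in> ?r \<Longrightarrow> y \<notin> {m \<in> B. succ m z}"
    using wfE_min[of ?r w "{m \<in> B. succ m z}"] assms(4,5) by blast
  have "\<not> succ y m" if "y \<in> B" for y
  proof
    assume "succ y m"
    with m that assms(2,3) have "succ y z" by (auto intro: succ_trans[of y n c m z])
    with m_max[of y] m that \<open>succ y m\<close> show False by blast
  qed
  with m show ?thesis by (auto simp: maxel_def)
qed

lemma auxS_Suc_dominated:
  assumes "finite A" and "A \<subseteq> hyperplane n c" and "z \<in> auxS A (Suc k)"
  shows "\<exists>w\<in>auxS A k. succ w z"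
proof -
  have z: "z \<in> remS A k" "z \<notin> maxel (remS A k)"
    using assms(3) by (auto simp: auxS_def maxel_def)
  then obtain w where w: "w \<in> remS A k" "succ w z"
    by (auto simp: maxel_def)
  have "finite (remS A k)"
    using assms(1) remS_subset by (rule finite_subset[rotated])
  moreover have "remS A k \<subseteq> hyperplane n c"
    using assms(2) remS_subset by blast
  ultimately show ?thesis
    using z(1) w unfolding auxS_def by (intro maxel_dominates[of "remS A k" n c z w]) auto
qed

lemma auxS_dominated:
  assumes "finite A" and "A \<subseteq> hyperplane n c" and "k < k'" and "z \<in> auxS A k'"
  shows "\<exists>w\<in>auxS A k. succ w z"
  using \<open>k < k'\<close> \<open>z \<in> auxS A k'\<close>
proof (induction k' arbitrary: z)
  case (Suc k')
  then obtain w' where w': "w' \<in> auxS A k'" "succ w' z"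
    using auxS_Suc_dominated[OF assms(1,2)] by blast
  show ?case
  proof (cases "k = k'")
    case True
    with w' show ?thesis by blast
  next
    case False
    with Suc.prems(1) have "k < k'" by simp
    with Suc.IH w'(1) obtain w where w: "w \<in> auxS A k" "succ w w'" by blast
    have "{w, w', z} \<subseteq> hyperplane n c"
      using w(1) w'(1) Suc.prems(2) assms(2) auxS_subset by blast
    with w(2) w'(2) have "succ w z" by (auto intro: succ_trans[of w n c w' z])
    with w(1) show ?thesis by blast
  qed
qed simp

lemma SG_subset_hyperplane:
  assumes "A \<subseteq> hyperplane n c"
  shows "SG d A i \<subseteq> hyperplane (n * d) (real d * c)"
  unfolding SG_def Sp_def using assms auxS_subset by (blast intro: rep_in_hyperplane)

lemma SG_dominated:
  assumes "d \<ge> 1" and "finite A" and "A \<subseteq> hyperplane n c"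
    and "i < i'" and "i' \<le> ellp A" and "y \<in> SG d A i"
  shows "\<exists>y'\<in>SG d A i'. succ y' y"
proof -
  obtain z where z: "z \<in> auxS A (ellp A - i)" "y = rep d z"
    using assms(6) by (auto simp: SG_def Sp_def)
  moreover have "ellp A - i' < ellp A - i"
    using assms(4,5) by simp
  ultimately obtain w where w: "w \<in> auxS A (ellp A - i')" "succ w z"
    using auxS_dominated[OF assms(2,3)] by blast
  have "w \<in> hyperplane n c" "z \<in> hyperplane n c"
    using w(1) z(1) assms(3) auxS_subset by blast+
  with w(2) z(2) assms(1) have "succ (rep d w) y"
    by (simp add: succ_rep)
  moreover have "rep d w \<in> SG d A i'"
    using w(1) by (auto simp: SG_def Sp_def)
  ultimately show ?thesis by blast
qed

text \<open>The index of the piece of \<open>Stilde\<close> containing \<open>x\<close>; it is \<open>Suc (ellp A)\<close> when no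
  layer dominates \<open>x\<close>.\<close>
definition rank :: "nat \<Rightarrow> real list set \<Rightarrow> real list \<Rightarrow> nat" where
  "rank d A x = (LEAST i. \<forall>j\<in>{i..ellp A}. \<exists>y\<in>SG d A j. succ y x)"

definition canonical_partition :: "nat \<Rightarrow> real list set \<Rightarrow> real list set \<Rightarrow> nat \<Rightarrow> real list set"
  where "canonical_partition d A S i = {x \<in> Stilde d A S. rank d A x = i}"

lemma rank_le: "rank d A x \<le> Suc (ellp A)"
  unfolding rank_def by (rule Least_le) simp

lemma good_partition_mem_Stilde:
  assumes "good_partition d A S T" and "x \<in> T i"
  shows "i \<le> Suc (ellp A)" and "x \<in> Stilde d A S"
proof -
  have empty: "\<forall>i>Suc (ellp A). T i = {}"
    and cover: "(\<Union>i\<in>{0..Suc (ellp A)}. T i) = Stilde d A S"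
    using assms(1) by (simp_all add: good_partition_def)
  show i: "i \<le> Suc (ellp A)"
  proof (rule ccontr)
    assume "\<not> i \<le> Suc (ellp A)"
    with empty assms(2) show False by simp
  qed
  with assms(2) have "x \<in> (\<Union>j\<in>{0..Suc (ellp A)}. T j)"
    by auto
  with cover show "x \<in> Stilde d A S"
    by simp
qed

locale exponent_sets =
  fixes d n :: nat and c :: real and A S :: "real list set"
  assumes d_ge_1: "d \<ge> 1" and finite_A: "finite A" and A_hyperplane: "A \<subseteq> hyperplane n c"
    and S_hyperplane: "S \<subseteq> hyperplane (n * d) (real d * c)"
begin

lemma SG_hyperplane: "SG d A i \<subseteq> hyperplane (n * d) (real d * c)"
  using A_hyperplane by (rule SG_subset_hyperplane)

lemma Stilde_hyperplane: "Stilde d A S \<subseteq> hyperplane (n * d) (real d * c)"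
  using S_hyperplane by (auto simp: Stilde_def)

lemma dominated_upwards:
  assumes "x \<in> hyperplane (n * d) (real d * c)" and "j \<le> j'" and "j' \<le> ellp A"
    and "y \<in> SG d A j" and "succ y x"
  shows "\<exists>y'\<in>SG d A j'. succ y' x"
proof (cases "j = j'")
  case False
  with assms(2-4) obtain y' where y': "y' \<in> SG d A j'" "succ y' y"
    using SG_dominated[OF d_ge_1 finite_A A_hyperplane] by (meson le_neq_implies_less)
  have "y' \<in> hyperplane (n * d) (real d * c)" "y \<in> hyperplane (n * d) (real d * c)"
    using y'(1) assms(4) SG_hyperplane by blast+
  with assms(1,5) y' show ?thesis
    by (blast intro: succ_trans[of y' "n * d" "real d * c" y x])
qed (use assms in blast)

lemma dominated_iff_rank_le:
  assumes "x \<in> hyperplane (n * d) (real d * c)" and "j \<le> ellp A"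
  shows "(\<exists>y\<in>SG d A j. succ y x) \<longleftrightarrow> rank d A x \<le> j"
proof
  assume "\<exists>y\<in>SG d A j. succ y x"
  then have "\<forall>j'\<in>{j..ellp A}. \<exists>y\<in>SG d A j'. succ y x"
    using dominated_upwards[OF assms(1)] by auto
  then show "rank d A x \<le> j"
    unfolding rank_def by (rule Least_le)
next
  assume "rank d A x \<le> j"
  moreover have "\<forall>j\<in>{rank d A x..ellp A}. \<exists>y\<in>SG d A j. succ y x"
    unfolding rank_def by (rule LeastI[of _ "Suc (ellp A)"]) simp
  ultimately show "\<exists>y\<in>SG d A j. succ y x"
    using assms(2) by simp
qed

lemma good_partition_canonical_partition: "good_partition d A S (canonical_partition d A S)"
  unfolding good_partition_def
proof (intro conjI allI impI ballI)
  show "canonical_partition d A S i = {}" if "i > Suc (ellp A)" for i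
    using that rank_le[of d A] by (auto simp: canonical_partition_def not_le[symmetric])
  show "(\<Union>i\<in>{0..Suc (ellp A)}. canonical_partition d A S i) = Stilde d A S"
    using rank_le[of d A] by (auto simp: canonical_partition_def)
  show "canonical_partition d A S i \<inter> canonical_partition d A S j = {}" if "i \<noteq> j" for i j
    using that by (auto simp: canonical_partition_def)
next
  fix i0 i y0 x
  assume i: "i0 < i \<and> i \<le> Suc (ellp A)" and y0: "y0 \<in> SG d A i0"
    and x: "x \<in> canonical_partition d A S i"
  have "x \<in> hyperplane (n * d) (real d * c)" and "rank d A x = i"
    using x Stilde_hyperplane by (auto simp: canonical_partition_def)
  with i y0 have "\<not> succ y0 x"
    using dominated_iff_rank_le[of x i0] by auto
  then show "\<not> comparable x y0 \<or> succ x y0"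
    by (auto simp: comparable_def)
next
  fix i0 x0 i
  assume "x0 \<in> canonical_partition d A S i0" and "i0 \<le> i \<and> i \<le> ellp A"
  then show "\<exists>y\<in>SG d A i. succ y x0"
    using Stilde_hyperplane dominated_iff_rank_le[of x0 i]
    by (auto simp: canonical_partition_def)
qed

lemma good_partition_memD:
  assumes "good_partition d A S T" and "x \<in> T i"
  shows "x \<in> canonical_partition d A S i"
proof -
  have below: "\<forall>i0 i. i0 < i \<and> i \<le> Suc (ellp A) \<longrightarrow>
                  (\<forall>y0\<in>SG d A i0. \<forall>x\<in>T i. \<not> comparable x y0 \<or> succ x y0)"
    and above: "\<forall>i0. \<forall>x0\<in>T i0. \<forall>i. i0 \<le> i \<and> i \<le> ellp A \<longrightarrow> (\<exists>y\<in>SG d A i. succ y x0)"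
    using assms(1) by (simp_all add: good_partition_def)
  have i: "i \<le> Suc (ellp A)" and x: "x \<in> Stilde d A S"
    using good_partition_mem_Stilde[OF assms] by simp_all
  then have x_hyp: "x \<in> hyperplane (n * d) (real d * c)"
    using Stilde_hyperplane by blast
  have "rank d A x \<le> i"
  proof (cases "i = Suc (ellp A)")
    case False
    with i have "i \<le> ellp A" by simp
    moreover have "\<exists>y\<in>SG d A i. succ y x"
      using above[rule_format, OF assms(2), of i] calculation by simp
    ultimately show ?thesis
      using dominated_iff_rank_le[OF x_hyp] by blast
  qed (use rank_le in simp)
  moreover have "\<not> rank d A x < i"
  proof
    assume less: "rank d A x < i"
    with i obtain y where y: "y \<in> SG d A (rank d A x)" "succ y x"
      using dominated_iff_rank_le[OF x_hyp, of "rank d A x"] by auto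
    have "\<not> comparable x y \<or> succ x y"
      using below[rule_format, of "rank d A x" i y x] less i y(1) assms(2) by blast
    with y(2) have "succ x y"
      by (auto simp: comparable_def)
    moreover have "y \<in> hyperplane (n * d) (real d * c)"
      using y(1) SG_hyperplane by blast
    ultimately show False
      using y(2) x_hyp succ_asym by blast
  qed
  ultimately show ?thesis
    using x by (simp add: canonical_partition_def)
qed

lemma good_partition_unique:
  assumes "good_partition d A S T"
  shows "T = canonical_partition d A S"
proof (intro ext set_eqI iffI)
  fix i x
  show "x \<in> T i \<Longrightarrow> x \<in> canonical_partition d A S i"
    using assms by (rule good_partition_memD)
  assume x: "x \<in> canonical_partition d A S i"
  then have "x \<in> (\<Union>j\<in>{0..Suc (ellp A)}. T j)"
    using assms by (simp add: good_partition_def canonical_partition_def)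
  then obtain j where "x \<in> T j"
    by blast
  with assms x show "x \<in> T i"
    using good_partition_memD by (auto simp: canonical_partition_def)
qed

lemma canonical_partition_ordered:
  assumes "i0 < i" and x0: "x0 \<in> canonical_partition d A S i0"
    and x: "x \<in> canonical_partition d A S i"
  shows "\<not> succ x0 x"
proof
  assume "succ x0 x"
  have hyp: "x0 \<in> hyperplane (n * d) (real d * c)" "x \<in> hyperplane (n * d) (real d * c)"
    and ranks: "rank d A x0 = i0" "rank d A x = i"
    using x0 x Stilde_hyperplane by (auto simp: canonical_partition_def)
  with assms(1) rank_le[of d A x] have "i0 \<le> ellp A"
    by simp
  with hyp ranks obtain y where y: "y \<in> SG d A i0" "succ y x0"
    using dominated_iff_rank_le[of x0 i0] by auto
  have "y \<in> hyperplane (n * d) (real d * c)"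
    using y(1) SG_hyperplane by blast
  with hyp y(2) \<open>succ x0 x\<close> have "succ y x"
    by (blast intro: succ_trans[of y "n * d" "real d * c" x0 x])
  with y(1) hyp(2) \<open>i0 \<le> ellp A\<close> have "rank d A x \<le> i0"
    using dominated_iff_rank_le[of x i0] by blast
  with ranks assms(1) show False
    by simp
qed

end

theorem proposition4p7:
  fixes n d :: nat and Sp' S :: "real list set"
  assumes "d > 1" and "n \<ge> 1"
    and "finite Sp'" and "Sp' \<noteq> {}" and "finite S"
    and "\<forall>v\<in>Sp'. length v = n \<and> sorted_wrt (\<ge>) v \<and> sum_list v = 0"
    and "\<forall>v\<in>S. length v = n * d \<and> sorted_wrt (\<ge>) v \<and> sum_list v = 0"
  shows "(\<exists>!T. good_partition d Sp' S T) \<and>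
         (\<forall>T. good_partition d Sp' S T \<longrightarrow>
            (\<forall>i0 i. i0 < i \<and> i \<le> Suc (ellp Sp') \<longrightarrow>
               (\<forall>x0\<in>T i0. \<forall>x\<in>T i. \<not> comparable x x0 \<or> succ x x0)))"
proof -
  interpret exponent_sets d n 0 Sp' S
    using assms(1,3,6,7) by unfold_locales (auto simp: hyperplane_def)
  have "\<exists>!T. good_partition d Sp' S T"
    using good_partition_canonical_partition good_partition_unique by blast
  moreover have "\<not> comparable x x0 \<or> succ x x0"
    if "good_partition d Sp' S T" and "i0 < i" and "x0 \<in> T i0" and "x \<in> T i" for T i0 i x0 x
    using that canonical_partition_ordered[of i0 i x0 x] good_partition_unique[OF that(1)]
    by (auto simp: comparable_def)
  ultimately show ?thesis
    by blast
qed

end
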